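(* Let $L>0$ and let $\alpha,\beta:\mathbb{R}\to\mathbb{R}^2$ be smooth $L$-periodic maps (initial data) with $\alpha'$ nowhere zero, $\langle\beta,\alpha'\rangle = 0$ and $|\alpha'|^2+|\beta|^2=1$, and such that $\alpha$ has zero rotation index. Let $\gamma(t,s) = \tfrac12(\alpha(s+t)+\alpha(s-t)) + \tfrac12\int_{s-t}^{s+t}\beta(\xi)\,d\xi$. Then there exists a time $T$ such that the unit tangent map $U(T,\cdot)$ of the curve $s\mapsto\gamma(T,s)$ is discontinuous, i.e. $s\mapsto \gamma_{,s}(T,s)/|\gamma_{,s}(T,s)|$ (defined where $\gamma_{,s}(T,s)\neq0$) does not extend to a continuous map on $\mathbb{R}$.
   Context: The rotation index of $\alpha$ is the degree of $\alpha'/|\alpha'|$ as a map from $\mathbb{R}/L\mathbb{Z}$ to the unit circle. *)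

theory Defs
  imports "HOL-Analysis.Analysis"
begin

text \<open>The plane R^2 is identified with the complex numbers (real inner product = inner on complex).\<close>

definition vderiv :: "(real \<Rightarrow> complex) \<Rightarrow> real \<Rightarrow> complex" where
  "vderiv f = (\<lambda>t. vector_derivative f (at t))"

definition smooth :: "(real \<Rightarrow> complex) \<Rightarrow> bool" where
  "smooth f \<longleftrightarrow> (\<forall>n t. (vderiv ^^ n) f differentiable (at t))"

definition periodic :: "real \<Rightarrow> (real \<Rightarrow> 'a) \<Rightarrow> bool" where
  "periodic L f \<longleftrightarrow> (\<forall>s. f (s + L) = f s)"

definition is_lift :: "(real \<Rightarrow> complex) \<Rightarrow> (real \<Rightarrow> real) \<Rightarrow> bool" where
  "is_lift U \<theta> \<longleftrightarrow> continuous_on UNIV \<theta> \<and> (\<forall>s. U s = cis (\<theta> s))"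

definition circle_degree :: "real \<Rightarrow> (real \<Rightarrow> complex) \<Rightarrow> int" where
  "circle_degree L U = (THE d::int. \<forall>\<theta>. is_lift U \<theta> \<longrightarrow> \<theta> L - \<theta> 0 = 2 * pi * of_int d)"

definition rotation_index :: "real \<Rightarrow> (real \<Rightarrow> complex) \<Rightarrow> int" where
  "rotation_index L \<alpha> = circle_degree L (\<lambda>s. vderiv \<alpha> s / of_real (norm (vderiv \<alpha> s)))"

definition gamma_sol :: "(real \<Rightarrow> complex) \<Rightarrow> (real \<Rightarrow> complex) \<Rightarrow> real \<Rightarrow> real \<Rightarrow> complex" where
  "gamma_sol \<alpha> \<beta> t s = (\<alpha> (s + t) + \<alpha> (s - t)) / 2 + integral {s - t..s + t} \<beta> / 2"

end

theory Submission
  imports Defs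
begin

text \<open>
  Put \<open>u = \<alpha>' + \<beta>\<close> and \<open>v = \<alpha>' - \<beta>\<close>. The hypotheses make \<open>u\<close> and \<open>v\<close> unit vectors
  with \<open>u + v = 2\<alpha>'\<close> nowhere zero and of zero mean, and d'Alembert's formula gives
  \<open>\<gamma>\<^sub>s(T, s) = (u (s + T) + v (s - T)) / 2\<close>. Lift \<open>u = cis \<phi>\<close> and \<open>v = cis \<psi>\<close> with
  \<open>|\<phi> - \<psi>| < \<pi>\<close>; then \<open>\<alpha>'\<close> has argument \<open>(\<phi> + \<psi>) / 2\<close>, so zero rotation index makes
  \<open>\<phi>\<close> and \<open>\<psi>\<close> periodic. If \<open>\<phi> x - \<psi> y\<close> never reached \<open>\<pm>\<pi>\<close>, all values of \<open>\<alpha>'\<close>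
  would lie in a closed half-plane, which is impossible for a nonvanishing function of zero
  mean. So some level \<open>\<phi> x - \<psi> y = \<pm>\<pi>\<close> is hit with \<open>y < x\<close>, and even transversally
  (\<open>\<phi>' x \<noteq> \<psi>' y\<close>): \<open>\<phi>\<close> has a noncritical point in the relevant range of values, and a
  periodic function returns to each of its values with a slope of the other sign.
  At \<open>T = (x - y) / 2\<close> the tangent \<open>\<gamma>\<^sub>s(T, \<cdot>)\<close> then has a simple zero at \<open>(x + y) / 2\<close>,
  across which its direction reverses.
\<close>

section \<open>Periodic functions on the line\<close>

lemma periodic_add_int_mult:
  assumes "periodic L f"
  shows "f (x + of_int k * L) = f x"
proof (induction k arbitrary: x rule: int_induct[where k = 0])
  case base
  show ?case by simp
next
  case (step1 i)
  have "f (x + of_int (i + 1) * L) = f ((x + of_int i * L) + L)"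
    by (simp add: algebra_simps)
  with assms step1 show ?case by (simp add: periodic_def)
next
  case (step2 i)
  have "f (x + of_int (i - 1) * L) = f ((x - L) + of_int i * L)"
    by (simp add: algebra_simps)
  with assms step2 show ?case by (metis periodic_def diff_add_cancel)
qed

lemma periodic_range_eq:
  fixes f :: "real \<Rightarrow> 'a"
  assumes "periodic L f" "L > 0"
  shows "range f = f ` {0..L}"
proof -
  have "f x \<in> f ` {0..L}" for x
  proof -
    define k where "k = \<lfloor>x / L\<rfloor>"
    have "of_int k * L \<le> x" "x < of_int k * L + L"
      using assms(2) floor_divide_lower[of L x] floor_divide_upper[of L x]
      by (simp_all add: k_def distrib_right)
    then have "x - of_int k * L \<in> {0..L}" by simp
    moreover have "f x = f (x - of_int k * L + of_int k * L)" by simp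
    ultimately show ?thesis using periodic_add_int_mult[OF assms(1)] by (metis image_eqI)
  qed
  then show ?thesis by blast
qed

lemma periodic_attains_inf_sup:
  fixes f :: "real \<Rightarrow> real"
  assumes "periodic L f" "L > 0" "continuous_on UNIV f"
  obtains a b where "\<And>x. f a \<le> f x" "\<And>x. f x \<le> f b"
proof -
  have "compact (f ` {0..L})" "f ` {0..L} \<noteq> {}"
    using assms by (auto intro!: compact_continuous_image continuous_on_subset[OF assms(3)])
  then obtain m M where "m \<in> f ` {0..L}" "M \<in> f ` {0..L}"
    "\<forall>y \<in> f ` {0..L}. m \<le> y \<and> y \<le> M"
    using compact_attains_inf compact_attains_sup by meson
  with periodic_range_eq[OF assms(1,2)] that show ?thesis
    by (metis imageE rangeI)
qed

lemma continuous_range_IVT: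
  fixes f :: "real \<Rightarrow> real"
  assumes "continuous_on UNIV f" "f a \<le> y" "y \<le> f b"
  obtains x where "f x = y"
  using connectedD_interval[OF connected_continuous_image[OF assms(1) connected_UNIV]] assms(2,3)
  by blast

lemma has_vector_derivative_at_shift:
  fixes g :: "real \<Rightarrow> 'a::real_normed_vector"
  assumes "(g has_vector_derivative D) (at (x + k))"
  shows "((\<lambda>s. g (s + k)) has_vector_derivative D) (at x)"
proof -
  have "((\<lambda>s. s + k) has_vector_derivative 1) (at x)"
    by (auto intro!: derivative_eq_intros)
  from vector_diff_chain_at[OF this] assms show ?thesis by (simp add: o_def)
qed

lemma periodic_vector_derivative:
  fixes f :: "real \<Rightarrow> 'a::real_normed_vector"
  assumes "periodic L f" "\<And>x. (f has_vector_derivative f' x) (at x)"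
  shows "periodic L f'"
  unfolding periodic_def
proof
  fix x
  have "((\<lambda>s. f (s + L)) has_vector_derivative f' (x + L)) (at x)"
    using assms(2) by (rule has_vector_derivative_at_shift)
  moreover have "(\<lambda>s. f (s + L)) = f" using assms(1) by (simp add: periodic_def)
  ultimately show "f' (x + L) = f' x" using assms(2) vector_derivative_unique_at by metis
qed

lemma DERIV_clamp_eq_0:
  fixes f f' :: "real \<Rightarrow> real"
  assumes der: "\<And>x. DERIV f x :> f' x" and "lo < hi"
    and flat: "\<And>t. lo \<le> f t \<Longrightarrow> f t \<le> hi \<Longrightarrow> f' t = 0"
  shows "DERIV (\<lambda>t. max lo (min hi (f t))) t :> 0"
proof -
  define g where "g t = max lo (min hi (f t))" for t
  have "((\<lambda>y. (g y - g t) / (y - t)) \<longlongrightarrow> 0) (at t)"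
  proof (cases "lo \<le> f t \<and> f t \<le> hi")
    case True
    with der[of t] flat[of t] have "((\<lambda>y. (f y - f t) / (y - t)) \<longlongrightarrow> 0) (at t)"
      by (simp add: has_field_derivative_iff)
    then have "((\<lambda>y. \<bar>(f y - f t) / (y - t)\<bar>) \<longlongrightarrow> 0) (at t)"
      by (rule tendsto_rabs_zero)
    moreover have "norm ((g y - g t) / (y - t)) \<le> \<bar>(f y - f t) / (y - t)\<bar>" for y
    proof -
      have "\<bar>g y - g t\<bar> \<le> \<bar>f y - f t\<bar>" unfolding g_def by linarith
      then show ?thesis by (simp add: abs_divide divide_right_mono)
    qed
    ultimately show ?thesis
      using Lim_null_comparison always_eventually by (metis (no_types, lifting))
  next
    case False
    have lim: "(f \<longlongrightarrow> f t) (at t)"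
      using DERIV_isCont[OF der] by (simp add: isCont_def)
    consider "f t < lo" | "hi < f t" using False by linarith
    then have "eventually (\<lambda>y. g y = g t) (at t)"
    proof cases
      case 1
      from order_tendstoD(2)[OF lim this] show ?thesis
        by eventually_elim (use 1 in \<open>simp add: g_def\<close>)
    next
      case 2
      from order_tendstoD(1)[OF lim this] show ?thesis
        by eventually_elim (use 2 \<open>lo < hi\<close> in \<open>simp add: g_def\<close>)
    qed
    then have "eventually (\<lambda>y. (g y - g t) / (y - t) = 0) (at t)"
      by eventually_elim simp
    then show ?thesis
      by (rule tendsto_eventually)
  qed
  then show ?thesis
    by (simp add: g_def has_field_derivative_iff)
qed

lemma exists_value_between_with_nonzero_deriv:
  fixes f f' :: "real \<Rightarrow> real"
  assumes der: "\<And>x. DERIV f x :> f' x" and "f x1 = lo" "f x2 = hi" "lo < hi"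
  obtains \<xi> where "lo \<le> f \<xi>" "f \<xi> \<le> hi" "f' \<xi> \<noteq> 0"
proof -
  have "\<exists>\<xi>. lo \<le> f \<xi> \<and> f \<xi> \<le> hi \<and> f' \<xi> \<noteq> 0"
  proof (rule ccontr)
    assume "\<nexists>\<xi>. lo \<le> f \<xi> \<and> f \<xi> \<le> hi \<and> f' \<xi> \<noteq> 0"
    then have "DERIV (\<lambda>t. max lo (min hi (f t))) t :> 0" for t
      using DERIV_clamp_eq_0[OF der \<open>lo < hi\<close>] by blast
    then have "max lo (min hi (f x1)) = max lo (min hi (f x2))"
      using DERIV_isconst_all by blast
    with assms(2-4) show False by simp
  qed
  with that show ?thesis by blast
qed

lemma exists_first_hitting_point:
  fixes f :: "real \<Rightarrow> real"
  assumes "continuous_on {a..b} f" "a \<le> b" "w < f a" "f b = w"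
  obtains x where "a < x" "x \<le> b" "f x = w" "\<And>t. a \<le> t \<Longrightarrow> t < x \<Longrightarrow> w < f t"
proof -
  define Z where "Z = {t \<in> {a..b}. f t = w}"
  have "compact Z"
    unfolding Z_def using continuous_closed_preimage_constant[OF assms(1) closed_atLeastAtMost]
    by (metis (no_types, lifting) bounded_closed_interval bounded_subset compact_eq_bounded_closed
        mem_Collect_eq subsetI)
  moreover have "b \<in> Z"
    using assms by (simp add: Z_def)
  ultimately obtain x where "x \<in> Z" and first: "\<And>z. z \<in> Z \<Longrightarrow> x \<le> z"
    using compact_attains_inf[of Z] by blast
  then have "a < x" "x \<le> b" "f x = w"
    using assms(3) by (fastforce simp: Z_def)+
  moreover have "w < f t" if "a \<le> t" "t < x" for t
  proof (rule ccontr)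
    assume "\<not> w < f t"
    with assms(3) IVT2'[of f t w a] continuous_on_subset[OF assms(1)] that \<open>x \<le> b\<close>
    obtain s where "a \<le> s" "s \<le> t" "f s = w" by fastforce
    with that \<open>x \<le> b\<close> first[of s] show False by (auto simp: Z_def)
  qed
  ultimately show ?thesis using that by blast
qed

lemma periodic_returns_with_nonpos_deriv:
  fixes f f' :: "real \<Rightarrow> real"
  assumes der: "\<And>x. DERIV f x :> f' x" and "periodic L f" "L > 0" and "f' \<xi> > 0"
  obtains x where "f x = f \<xi>" "f' x \<le> 0"
proof -
  obtain d where d: "d > 0" "\<And>h. 0 < h \<Longrightarrow> h < d \<Longrightarrow> f \<xi> < f (\<xi> + h)"
    using DERIV_pos_inc_right[OF der \<open>f' \<xi> > 0\<close>] by blast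
  define a where "a = \<xi> + min (d / 2) (L / 2)"
  have "f \<xi> < f a" "a \<le> \<xi> + L"
    using d \<open>L > 0\<close> by (auto simp: a_def)
  moreover have "continuous_on {a..\<xi> + L} f"
    by (meson DERIV_isCont continuous_at_imp_continuous_on der)
  moreover have "f (\<xi> + L) = f \<xi>"
    using \<open>periodic L f\<close> by (simp add: periodic_def)
  txt \<open>The first return to the level \<open>f \<xi>\<close> after \<open>\<xi>\<close> is reached from above.\<close>
  ultimately obtain x where "a < x" "f x = f \<xi>" and above: "\<And>t. a \<le> t \<Longrightarrow> t < x \<Longrightarrow> f \<xi> < f t"
    using exists_first_hitting_point[of a "\<xi> + L" f "f \<xi>"] by blast
  have "f' x \<le> 0"
  proof (rule ccontr)
    assume "\<not> f' x \<le> 0"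
    then obtain e where "e > 0" and left: "\<And>h. 0 < h \<Longrightarrow> h < e \<Longrightarrow> f (x - h) < f x"
      using DERIV_pos_inc_left[OF der, of x] by force
    define h where "h = min (e / 2) ((x - a) / 2)"
    have "h \<le> e / 2" "h \<le> (x - a) / 2"
      unfolding h_def by (rule min.cobounded1, rule min.cobounded2)
    moreover have "0 < h"
      using \<open>e > 0\<close> \<open>a < x\<close> unfolding h_def by simp
    ultimately have "0 < h" "h < e" "a \<le> x - h"
      using \<open>e > 0\<close> \<open>a < x\<close> by (simp_all add: field_simps)
    then have "f (x - h) < f x" "f \<xi> < f (x - h)"
      using left above[of "x - h"] by auto
    with \<open>f x = f \<xi>\<close> show False by linarith
  qed
  with \<open>f x = f \<xi>\<close> that show ?thesis by blast
qed

lemma periodic_level_point_with_other_deriv: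
  fixes f f' :: "real \<Rightarrow> real"
  assumes der: "\<And>x. DERIV f x :> f' x" and "periodic L f" "L > 0" and "f' \<xi> \<noteq> 0"
  obtains x where "f x = f \<xi>" "f' x \<noteq> f' \<xi>"
proof (cases "f' \<xi> > 0")
  case True
  then obtain x where "f x = f \<xi>" "f' x \<le> 0"
    using periodic_returns_with_nonpos_deriv[OF assms(1-3)] by blast
  with True that show ?thesis by fastforce
next
  case False
  have "\<And>x. DERIV (\<lambda>x. - f x) x :> - f' x" "periodic L (\<lambda>x. - f x)"
    using der \<open>periodic L f\<close> by (auto intro: derivative_intros simp: periodic_def)
  moreover have "- f' \<xi> > 0" using False assms(4) by simp
  ultimately obtain x where "f x = f \<xi>" "f' x \<ge> 0"
    using periodic_returns_with_nonpos_deriv[of "\<lambda>x. - f x" "\<lambda>x. - f' x" L \<xi>] \<open>L > 0\<close>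
    by auto
  with \<open>- f' \<xi> > 0\<close> that show ?thesis by fastforce
qed

lemma exists_int_shift_beyond:
  fixes L :: real
  assumes "L > 0"
  obtains k :: int where "y < x + of_int k * L"
proof
  have "(y - x) / L < of_int (\<lceil>(y - x) / L\<rceil> + 1)"
    by linarith
  with assms show "y < x + of_int (\<lceil>(y - x) / L\<rceil> + 1) * L"
    by (simp add: divide_less_eq algebra_simps)
qed

lemma periodic_level_transversal:
  fixes \<phi> \<psi> \<phi>' \<psi>' :: "real \<Rightarrow> real"
  assumes d\<phi>: "\<And>x. DERIV \<phi> x :> \<phi>' x" and d\<psi>: "\<And>x. DERIV \<psi> x :> \<psi>' x"
    and p\<phi>: "periodic L \<phi>" and p\<psi>: "periodic L \<psi>" and "L > 0"
    and below: "\<phi> x1 - \<psi> y1 < c" and above: "c < \<phi> x2 - \<psi> y2"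
    and "\<phi> p1 \<noteq> \<phi> p2" and "\<psi> q1 \<noteq> \<psi> q2"
  obtains x y where "y < x" "\<phi> x - \<psi> y = c" "\<phi>' x \<noteq> \<psi>' y"
proof -
  have c\<phi>: "continuous_on UNIV \<phi>" and c\<psi>: "continuous_on UNIV \<psi>"
    by (meson DERIV_isCont continuous_at_imp_continuous_on d\<phi> d\<psi>)+
  obtain a1 b1 where a1: "\<And>x. \<phi> a1 \<le> \<phi> x" and b1: "\<And>x. \<phi> x \<le> \<phi> b1"
    using periodic_attains_inf_sup[OF p\<phi> \<open>L > 0\<close> c\<phi>] by blast
  obtain a2 b2 where a2: "\<And>x. \<psi> a2 \<le> \<psi> x" and b2: "\<And>x. \<psi> x \<le> \<psi> b2"
    using periodic_attains_inf_sup[OF p\<psi> \<open>L > 0\<close> c\<psi>] by blast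
  txt \<open>On \<open>[lo, hi]\<close> both \<open>\<phi>\<close> and \<open>\<psi> + c\<close> take every value.\<close>
  define lo where "lo = max (\<phi> a1) (\<psi> a2 + c)"
  define hi where "hi = min (\<phi> b1) (\<psi> b2 + c)"
  have "\<phi> a1 < \<phi> b1" "\<psi> a2 < \<psi> b2"
    using a1 b1 a2 b2 \<open>\<phi> p1 \<noteq> \<phi> p2\<close> \<open>\<psi> q1 \<noteq> \<psi> q2\<close> by (metis antisym not_less)+
  moreover have "\<phi> a1 \<le> \<phi> x1" "\<psi> y1 \<le> \<psi> b2" "\<psi> a2 \<le> \<psi> y2" "\<phi> x2 \<le> \<phi> b1"
    using a1 b1 a2 b2 by auto
  ultimately have "lo < hi"
    using below above by (auto simp: lo_def hi_def)
  moreover obtain xl xh where "\<phi> xl = lo" "\<phi> xh = hi"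
    using continuous_range_IVT[OF c\<phi>, of a1 _ b1] \<open>lo < hi\<close> a1 b1 lo_def hi_def
    by (metis max.cobounded1 min.cobounded1 order.strict_trans2 less_imp_le order.trans)
  ultimately obtain \<xi> where \<xi>: "lo \<le> \<phi> \<xi>" "\<phi> \<xi> \<le> hi" "\<phi>' \<xi> \<noteq> 0"
    using exists_value_between_with_nonzero_deriv[OF d\<phi>] by metis
  obtain y where y: "\<psi> y = \<phi> \<xi> - c"
    using continuous_range_IVT[OF c\<psi>, of a2 "\<phi> \<xi> - c" b2] \<xi> by (auto simp: lo_def hi_def)
  obtain x0 where x0: "\<phi> x0 = \<phi> \<xi>" "\<phi>' x0 \<noteq> \<psi>' y"
  proof (cases "\<phi>' \<xi> = \<psi>' y")
    case True
    with periodic_level_point_with_other_deriv[OF d\<phi> p\<phi> \<open>L > 0\<close> \<xi>(3)] that show ?thesis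
      by metis
  qed (use that in blast)
  obtain k :: int where "y < x0 + of_int k * L"
    using exists_int_shift_beyond[OF \<open>L > 0\<close>] .
  moreover have "\<phi> (x0 + of_int k * L) = \<phi> x0" "\<phi>' (x0 + of_int k * L) = \<phi>' x0"
    using periodic_add_int_mult periodic_vector_derivative[OF p\<phi>] p\<phi> d\<phi>
    by (metis has_real_derivative_iff_has_vector_derivative)+
  ultimately show ?thesis
    using that x0 y by simp
qed

lemma difference_crossing_imp_nonconstant:
  fixes \<phi> \<psi> :: "real \<Rightarrow> real"
  assumes "continuous_on UNIV \<psi>" "\<phi> x1 - \<psi> y1 < c" "c < \<phi> x2 - \<psi> y2"
    and no_diagonal: "\<And>t. \<phi> t - \<psi> t \<noteq> c"
  obtains p1 p2 where "\<phi> p1 \<noteq> \<phi> p2"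
proof -
  have "\<exists>p. \<phi> p \<noteq> \<phi> x1"
  proof (rule ccontr)
    assume "\<nexists>p. \<phi> p \<noteq> \<phi> x1"
    then have const: "\<phi> p = \<phi> x1" for p
      by blast
    then have "\<psi> y2 \<le> \<phi> x1 - c" "\<phi> x1 - c \<le> \<psi> y1"
      using assms(2,3) const[of x2] by linarith+
    then obtain y where "\<psi> y = \<phi> x1 - c"
      using continuous_range_IVT[OF assms(1)] by metis
    with no_diagonal[of y] const[of y] show False
      by simp
  qed
  with that show ?thesis by blast
qed

section \<open>Lifts of maps into the unit circle\<close>

lemma cis_eq_cis_imp:
  assumes "cis a = cis b"
  obtains n :: int where "a = b + 2 * pi * of_int n"
proof -
  have "exp (\<i> * complex_of_real a) = exp (\<i> * complex_of_real b)"
    using assms by (simp add: cis_conv_exp)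
  then obtain n :: int where "\<i> * complex_of_real a = \<i> * complex_of_real b + (of_int (2 * n) * pi) * \<i>"
    unfolding exp_eq by blast
  then have "Im (\<i> * complex_of_real a) = Im (\<i> * complex_of_real b + (of_int (2 * n) * pi) * \<i>)"
    by simp
  then show ?thesis using that by simp
qed

lemma cis_add_cis: "cis a + cis b = complex_of_real (2 * cos ((a - b) / 2)) * cis ((a + b) / 2)"
  by (simp add: complex_eq_iff cos_plus_cos sin_plus_sin algebra_simps)

lemma lifts_differ_by_const:
  assumes "is_lift U \<theta>1" "is_lift U \<theta>2"
  shows "\<theta>1 x - \<theta>2 x = \<theta>1 y - \<theta>2 y"
proof -
  define g where "g s = \<theta>1 s - \<theta>2 s" for s
  have "continuous_on UNIV g"
    using assms unfolding g_def is_lift_def by (intro continuous_intros) auto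
  moreover have int_valued: "\<exists>n::int. g s = 2 * pi * of_int n" for s
  proof -
    have "cis (\<theta>1 s) = cis (\<theta>2 s)"
      using assms by (simp add: is_lift_def)
    then obtain n :: int where "\<theta>1 s = \<theta>2 s + 2 * pi * of_int n"
      by (rule cis_eq_cis_imp)
    then show ?thesis by (auto simp: g_def)
  qed
  have "2 * pi \<le> norm (g y - g x)" if "g y \<noteq> g x" for x y
  proof -
    obtain n m :: int where nm: "g y = 2 * pi * of_int n" "g x = 2 * pi * of_int m"
      using int_valued by metis
    with that have "1 \<le> \<bar>n - m\<bar>" by auto
    then have "1 \<le> \<bar>of_int n - of_int m :: real\<bar>"
      by (metis of_int_1_le_iff of_int_abs of_int_diff)
    then have "2 * pi * 1 \<le> 2 * pi * \<bar>of_int n - of_int m :: real\<bar>"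
      by (intro mult_left_mono) auto
    with nm show ?thesis by (simp add: abs_mult right_diff_distrib[symmetric])
  qed
  ultimately have "g constant_on UNIV"
    by (intro continuous_discrete_range_constant[OF connected_UNIV]) (auto intro!: exI[of _ "2 * pi"])
  then show ?thesis
    unfolding constant_on_def g_def by (metis UNIV_I)
qed

lemma circle_degree_eq:
  assumes lift: "is_lift U \<theta>" and "U L = U 0"
  shows "\<theta> L - \<theta> 0 = 2 * pi * of_int (circle_degree L U)"
proof -
  obtain n :: int where n: "\<theta> L - \<theta> 0 = 2 * pi * of_int n"
    using lift \<open>U L = U 0\<close> cis_eq_cis_imp[of "\<theta> L" "\<theta> 0"] unfolding is_lift_def
    by (metis add_diff_cancel_left')
  have all_lifts: "\<theta>' L - \<theta>' 0 = 2 * pi * of_int n" if "is_lift U \<theta>'" for \<theta>'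
    using lifts_differ_by_const[OF that lift, of L 0] n by linarith
  have "circle_degree L U = n"
    unfolding circle_degree_def
  proof (rule the_equality)
    fix d :: int
    assume "\<forall>\<theta>. is_lift U \<theta> \<longrightarrow> \<theta> L - \<theta> 0 = 2 * pi * of_int d"
    with lift n show "d = n" by simp
  qed (use all_lifts in blast)
  with n show ?thesis by simp
qed

lemma exists_lift:
  assumes "continuous_on UNIV U" "\<And>s. norm (U s) = 1"
  obtains \<theta> where "is_lift U \<theta>"
proof -
  obtain g where g: "continuous_on UNIV g" "\<And>s. U s = exp (g s)"
    using continuous_logarithm_on_contractible[OF assms(1) contractible_UNIV] assms(2)
    by (metis UNIV_I norm_zero zero_neq_one)
  have "U s = cis (Im (g s))" for s
  proof -
    have "Re (g s) = 0" using assms(2)[of s] g(2)[of s] by simp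
    then have "g s = \<i> * of_real (Im (g s))" by (simp add: complex_eq_iff)
    then show ?thesis using g(2) by (metis cis_conv_exp)
  qed
  with g(1) show ?thesis
    using that unfolding is_lift_def by (metis continuous_on_Im)
qed

lemma unit_neq_minus_one_Arg:
  fixes z :: complex
  assumes "norm z = 1" "z \<noteq> -1"
  shows "cis (Arg z) = z" "\<bar>Arg z\<bar> < pi" "z \<notin> \<real>\<^sub>\<le>\<^sub>0"
proof -
  have "z \<noteq> 0"
    using assms(1) by auto
  then show "cis (Arg z) = z"
    using assms(1) by (simp add: cis_Arg sgn_eq)
  show slit: "z \<notin> \<real>\<^sub>\<le>\<^sub>0"
  proof
    assume "z \<in> \<real>\<^sub>\<le>\<^sub>0"
    then obtain r where "z = of_real r" "r \<le> 0"
      by (auto elim!: nonpos_Reals_cases)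
    with assms show False by simp
  qed
  then have "Arg z \<noteq> pi"
    using Arg_eq_pi[of z] by (auto simp: complex_nonpos_Reals_iff)
  then show "\<bar>Arg z\<bar> < pi"
    using mpi_less_Arg[of z] Arg_le_pi[of z] by simp
qed

lemma exists_close_lift:
  assumes lift: "is_lift U \<phi>" and "continuous_on UNIV V" "\<And>s. norm (V s) = 1"
    and not_antipodal: "\<And>s. U s \<noteq> - V s"
  obtains \<psi> where "is_lift V \<psi>" "\<And>s. \<bar>\<phi> s - \<psi> s\<bar> < pi"
proof -
  define w where "w s = U s * cnj (V s)" for s
  have unit_U: "norm (U s) = 1" and "U = (\<lambda>s. cis (\<phi> s))" for s
    using lift by (auto simp: is_lift_def)
  then have "continuous_on UNIV w"
    using lift assms(2) unfolding w_def is_lift_def by (auto intro!: continuous_intros)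
  have unit_w: "norm (w s) = 1" for s
    using unit_U assms(3) by (simp add: w_def norm_mult)
  have w_V: "w s * V s = U s" for s
    using assms(3)[of s] complex_norm_square[of "V s"] by (simp add: w_def ac_simps)
  then have "w s \<noteq> -1" for s
    using not_antipodal[of s] by (metis mult_minus_left mult_1)
  note w_Arg = unit_neq_minus_one_Arg[OF unit_w this]
  define \<psi> where "\<psi> s = \<phi> s - Arg (w s)" for s
  have "continuous_on UNIV \<psi>"
    using lift \<open>continuous_on UNIV w\<close> w_Arg(3)
    unfolding \<psi>_def is_lift_def by (intro continuous_intros) auto
  moreover have "V s = cis (\<psi> s)" for s
  proof -
    have "cis (\<psi> s) = U s / w s"
      using lift w_Arg(1)[of s] by (simp add: \<psi>_def is_lift_def cis_divide[symmetric])
    also have "\<dots> = V s"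
    proof -
      have "w s \<noteq> 0"
        using unit_w[of s] by auto
      with w_V[of s] show ?thesis
        by (metis nonzero_mult_div_cancel_left)
    qed
    finally show ?thesis by simp
  qed
  moreover have "\<bar>\<phi> s - \<psi> s\<bar> < pi" for s
    using w_Arg(2)[of s] by (simp add: \<psi>_def)
  ultimately show ?thesis
    using that unfolding is_lift_def by blast
qed

lemma lift_periodic:
  assumes lift: "is_lift U \<theta>" and "periodic L U" and "\<theta> L = \<theta> 0"
  shows "periodic L \<theta>"
proof -
  have "continuous_on UNIV (\<lambda>s. \<theta> (s + L))"
    using lift continuous_on_compose2[of UNIV \<theta> UNIV "\<lambda>s. s + L"]
    by (simp add: is_lift_def continuous_on_add)
  then have "is_lift U (\<lambda>s. \<theta> (s + L))"
    using lift \<open>periodic L U\<close> unfolding is_lift_def periodic_def by metis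
  from lifts_differ_by_const[OF this lift] \<open>\<theta> L = \<theta> 0\<close> show ?thesis
    unfolding periodic_def by (metis add_0 diff_self eq_iff_diff_eq_0)
qed

lemma lift_differentiable:
  assumes lift: "is_lift U \<theta>" and "U differentiable (at x)"
  shows "\<theta> differentiable (at x)"
proof -
  define z0 where "z0 = cnj (U x)"
  define g where "g s = \<theta> x + Im (Ln (U s * z0))" for s
  txt \<open>Near \<open>x\<close> the lift is the principal argument of \<open>U\<close> rotated back by \<open>U x\<close>.\<close>
  have "isCont \<theta> x"
    using lift continuous_on_eq_continuous_at by (auto simp: is_lift_def)
  then obtain d where "d > 0" and d: "\<And>s. dist s x < d \<Longrightarrow> \<bar>\<theta> s - \<theta> x\<bar> < pi"
    by (metis continuous_at_eps_delta dist_real_def pi_gt_zero)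
  have g_eq: "g s = \<theta> s" if "dist s x < d" for s
  proof -
    have "U s * z0 = cis (\<theta> s - \<theta> x)"
      using lift by (simp add: z0_def is_lift_def cis_cnj cis_mult)
    then have "U s * z0 = exp (\<i> * of_real (\<theta> s - \<theta> x))"
      by (simp add: cis_conv_exp)
    then have "Ln (U s * z0) = \<i> * of_real (\<theta> s - \<theta> x)"
      using d[OF that] by simp
    then show ?thesis by (simp add: g_def)
  qed
  have "U x * z0 = 1"
    using lift by (simp add: z0_def is_lift_def cis_cnj cis_mult)
  then have "(Ln has_field_derivative 1) (at (U x * z0))"
    using has_field_derivative_Ln[of 1] by simp
  moreover obtain U' where "(U has_vector_derivative U') (at x)"
    using assms(2) vector_derivative_works by blast
  then have "((\<lambda>s. U s * z0) has_vector_derivative U' * z0) (at x)"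
    by (rule has_vector_derivative_mult_left)
  ultimately have "(Ln \<circ> (\<lambda>s. U s * z0)) differentiable (at x)"
    using field_vector_diff_chain_at unfolding differentiable_def has_vector_derivative_def
    by (metis has_vector_derivative_def)
  then have "g differentiable (at x)"
    unfolding g_def o_def
    by (intro differentiable_compose[OF bounded_linear_imp_differentiable[OF bounded_linear_Im]]
        differentiable_add differentiable_const, simp add: o_def)
  then show ?thesis
    using differentiable_transform_within[of g x UNIV d \<theta>] \<open>d > 0\<close> g_eq by auto
qed

lemma has_vector_derivative_lift:
  assumes lift: "is_lift U \<theta>" and "DERIV \<theta> x :> d"
  shows "(U has_vector_derivative (\<i> * of_real d * U x)) (at x)"
proof -
  have "U = (\<lambda>s. cis (\<theta> s))"
    using lift by (auto simp: is_lift_def)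
  moreover have "((\<lambda>s. cis (\<theta> s)) has_derivative (\<lambda>t. (t * d) *\<^sub>R (\<i> * cis (\<theta> x)))) (at x)"
    using has_derivative_cis[OF assms(2)[unfolded has_field_derivative_def]] by (simp add: ac_simps)
  ultimately show ?thesis
    by (simp add: has_vector_derivative_def scaleR_conv_of_real ac_simps)
qed

section \<open>Functions with zero integral\<close>

lemma has_integral_zero_imp_root:
  fixes f :: "real \<Rightarrow> real"
  assumes "a < b" and cont: "continuous_on {a..b} f" and int: "(f has_integral 0) {a..b}"
  obtains t where "t \<in> {a..b}" "f t = 0"
proof -
  have "\<exists>t\<in>{a..b}. f t = 0"
  proof (rule ccontr)
    assume "\<not> (\<exists>t\<in>{a..b}. f t = 0)"
    then have no_root: "f t \<noteq> 0" if "t \<in> {a..b}" for t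
      using that by blast
    have same_sign: "0 \<le> f a * f t" if t: "t \<in> {a..b}" for t
    proof (rule ccontr)
      assume "\<not> 0 \<le> f a * f t"
      then have "f a \<le> 0 \<and> 0 \<le> f t \<or> f t \<le> 0 \<and> 0 \<le> f a"
        by (auto simp: zero_le_mult_iff)
      moreover have "continuous_on {a..t} f"
        using cont t by (auto intro: continuous_on_subset)
      ultimately obtain s where "a \<le> s" "s \<le> t" "f s = 0"
        using IVT'[of f a 0 t] IVT2'[of f t 0 a] t by auto
      with t no_root[of s] show False by auto
    qed
    have "((\<lambda>t. f a * f t) has_integral 0) {a..b}"
      using has_integral_mult_right[OF int, of "f a"] by simp
    then have "f a * f a = 0"
      using \<open>a < b\<close> same_sign
      by (intro has_integral_0_cbox_imp_0[of a b "\<lambda>t. f a * f t"])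
        (auto intro: continuous_intros cont)
    with no_root[of a] \<open>a < b\<close> show False by simp
  qed
  with that show ?thesis by blast
qed

lemma has_integral_zero_Re_nonneg_imp_root:
  fixes f :: "real \<Rightarrow> complex"
  assumes "a < b" and cont: "continuous_on {a..b} f" and int: "(f has_integral 0) {a..b}"
    and Re_nonneg: "\<And>t. t \<in> {a..b} \<Longrightarrow> 0 \<le> Re (f t)"
  obtains t where "t \<in> {a..b}" "f t = 0"
proof -
  have "((\<lambda>t. Re (f t)) has_integral 0) {a..b}" "((\<lambda>t. Im (f t)) has_integral 0) {a..b}"
    using has_integral_linear[OF int bounded_linear_Re] has_integral_linear[OF int bounded_linear_Im]
    by (simp_all add: o_def)
  moreover have "continuous_on {a..b} (\<lambda>t. Re (f t))" "continuous_on {a..b} (\<lambda>t. Im (f t))"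
    using cont by (auto intro: continuous_intros)
  ultimately have Re_zero: "Re (f t) = 0" if "t \<in> {a..b}" for t
    using has_integral_0_cbox_imp_0[of a b "\<lambda>t. Re (f t)" t] \<open>a < b\<close> Re_nonneg that by auto
  obtain t where "t \<in> {a..b}" "Im (f t) = 0"
    using has_integral_zero_imp_root[OF \<open>a < b\<close>] \<open>continuous_on {a..b} (\<lambda>t. Im (f t))\<close>
      \<open>((\<lambda>t. Im (f t)) has_integral 0) {a..b}\<close> by metis
  with Re_zero that show ?thesis by (simp add: complex_eq_iff)
qed

section \<open>Two unit fields with close lifts\<close>

lemma close_lifts_periodic:
  assumes lu: "is_lift u \<phi>" and lv: "is_lift v \<psi>" and "periodic L u" "periodic L v"
    and close: "\<And>t. \<bar>\<phi> t - \<psi> t\<bar> < pi"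
    and deg: "circle_degree L (\<lambda>t. sgn (u t + v t)) = 0"
  shows "periodic L \<phi>" "periodic L \<psi>"
proof -
  define \<theta> where "\<theta> t = (\<phi> t + \<psi> t) / 2" for t
  have "sgn (u t + v t) = cis (\<theta> t)" for t
  proof -
    have "0 < cos ((\<phi> t - \<psi> t) / 2)"
      using close[of t] by (intro cos_gt_zero_pi) auto
    have "u t + v t = of_real (2 * cos ((\<phi> t - \<psi> t) / 2)) * cis (\<theta> t)"
      using lu lv by (simp add: is_lift_def \<theta>_def cis_add_cis)
    then have "sgn (u t + v t) = of_real (sgn (2 * cos ((\<phi> t - \<psi> t) / 2))) * sgn (cis (\<theta> t))"
      by (simp only: Real_Vector_Spaces.sgn_mult sgn_of_real)
    with \<open>0 < cos ((\<phi> t - \<psi> t) / 2)\<close> show ?thesis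
      by (simp add: sgn_div_norm)
  qed
  then have "is_lift (\<lambda>t. sgn (u t + v t)) \<theta>"
    using lu lv unfolding is_lift_def \<theta>_def by (auto intro: continuous_intros)
  moreover have "sgn (u L + v L) = sgn (u 0 + v 0)"
    using \<open>periodic L u\<close> \<open>periodic L v\<close> by (metis add_0 periodic_def)
  ultimately have "\<theta> L = \<theta> 0"
    using circle_degree_eq deg by fastforce
  moreover have "\<phi> L - \<psi> L = \<phi> 0 - \<psi> 0"
  proof -
    have "u L = u 0" "v L = v 0"
      using \<open>periodic L u\<close> \<open>periodic L v\<close> by (metis add_0 periodic_def)+
    then have "cis (\<phi> L - \<psi> L) = cis (\<phi> 0 - \<psi> 0)"
      using lu lv by (simp add: is_lift_def cis_divide[symmetric])
    then obtain n :: int where n: "\<phi> L - \<psi> L = \<phi> 0 - \<psi> 0 + 2 * pi * of_int n"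
      by (rule cis_eq_cis_imp)
    with close[of L] close[of 0] have "\<bar>2 * pi * of_int n\<bar> < 2 * pi"
      by linarith
    then have "n = 0"
      by (simp add: abs_mult)
    with n show ?thesis by simp
  qed
  ultimately have "\<phi> L = \<phi> 0" "\<psi> L = \<psi> 0"
    by (simp_all add: \<theta>_def field_simps)
  with lu lv \<open>periodic L u\<close> \<open>periodic L v\<close> show "periodic L \<phi>" "periodic L \<psi>"
    by (simp_all add: lift_periodic)
qed

lemma close_lifts_difference_crosses_pi:
  fixes \<phi> \<psi> :: "real \<Rightarrow> real"
  assumes "L > 0" and p\<phi>: "periodic L \<phi>" and p\<psi>: "periodic L \<psi>"
    and c\<phi>: "continuous_on UNIV \<phi>" and c\<psi>: "continuous_on UNIV \<psi>"
    and close: "\<And>t. \<bar>\<phi> t - \<psi> t\<bar> < pi"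
    and int: "((\<lambda>t. cis (\<phi> t) + cis (\<psi> t)) has_integral 0) {0..L}"
  obtains c x1 y1 x2 y2 where "\<bar>c\<bar> = pi" "\<phi> x1 - \<psi> y1 < c" "c < \<phi> x2 - \<psi> y2"
proof -
  obtain a1 b1 where a1: "\<And>x. \<phi> a1 \<le> \<phi> x" and b1: "\<And>x. \<phi> x \<le> \<phi> b1"
    using periodic_attains_inf_sup[OF p\<phi> \<open>L > 0\<close> c\<phi>] by blast
  obtain a2 b2 where a2: "\<And>x. \<psi> a2 \<le> \<psi> x" and b2: "\<And>x. \<psi> x \<le> \<psi> b2"
    using periodic_attains_inf_sup[OF p\<psi> \<open>L > 0\<close> c\<psi>] by blast
  consider "pi < \<phi> b1 - \<psi> a2" | "\<phi> a1 - \<psi> b2 < - pi"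
    | "\<phi> b1 - \<psi> a2 \<le> pi" "- pi \<le> \<phi> a1 - \<psi> b2"
    by linarith
  then show ?thesis
  proof cases
    case 1
    with close[of 0] show ?thesis using that[of pi 0 0 b1 a2] by auto
  next
    case 2
    with close[of 0] show ?thesis using that[of "- pi" a1 b2 0 0] by auto
  next
    case 3
    txt \<open>Otherwise every \<open>cis \<phi> + cis \<psi>\<close> lies in the closed half-plane centred on
      direction \<open>\<theta>0\<close>, and a zero integral forces a zero.\<close>
    define \<theta>0 where "\<theta>0 = (\<phi> a1 + \<phi> b1 + \<psi> a2 + \<psi> b2) / 4"
    define f where "f t = (cis (\<phi> t) + cis (\<psi> t)) * cis (- \<theta>0)" for t
    have f_eq: "f t = of_real (2 * cos ((\<phi> t - \<psi> t) / 2)) * cis ((\<phi> t + \<psi> t) / 2 - \<theta>0)" for t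
      by (simp add: f_def cis_add_cis cis_mult mult.assoc)
    have cos_pos: "0 < cos ((\<phi> t - \<psi> t) / 2)" for t
      using close[of t] by (intro cos_gt_zero_pi) auto
    have "0 \<le> Re (f t)" for t
    proof -
      have "0 \<le> cos ((\<phi> t + \<psi> t) / 2 - \<theta>0)"
        using a1[of t] b1[of t] a2[of t] b2[of t] 3 unfolding \<theta>0_def
        by (intro cos_ge_zero) (simp_all add: field_simps)
      with cos_pos[of t] show ?thesis
        by (simp add: f_eq)
    qed
    moreover have "(f has_integral 0) {0..L}"
      using has_integral_mult_left[OF int, of "cis (- \<theta>0)"] unfolding f_def by simp
    moreover have "continuous_on {0..L} f"
      unfolding f_def by (intro continuous_intros continuous_on_subset[OF c\<phi>] continuous_on_subset[OF c\<psi>]) auto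
    ultimately obtain t where "f t = 0"
      using has_integral_zero_Re_nonneg_imp_root[OF \<open>L > 0\<close>] by metis
    with cos_pos[of t] show ?thesis
      by (simp add: f_eq)
  qed
qed

lemma exists_close_periodic_lifts:
  fixes u v :: "real \<Rightarrow> complex"
  assumes "periodic L u" "periodic L v" "continuous_on UNIV u" "continuous_on UNIV v"
    and "\<And>t. norm (u t) = 1" "\<And>t. norm (v t) = 1" "\<And>t. u t + v t \<noteq> 0"
    and "circle_degree L (\<lambda>t. sgn (u t + v t)) = 0"
  obtains \<phi> \<psi> where "is_lift u \<phi>" "is_lift v \<psi>" "\<And>t. \<bar>\<phi> t - \<psi> t\<bar> < pi"
    "periodic L \<phi>" "periodic L \<psi>"
proof -
  obtain \<phi> where lu: "is_lift u \<phi>"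
    using exists_lift assms(3,5) by blast
  moreover have "u t \<noteq> - v t" for t
    using assms(7)[of t] by auto
  ultimately obtain \<psi> where lv: "is_lift v \<psi>" and close: "\<And>t. \<bar>\<phi> t - \<psi> t\<bar> < pi"
    using exists_close_lift assms(4,6) by blast
  with lu close_lifts_periodic[OF lu lv assms(1,2) close assms(8)] that show ?thesis
    by blast
qed

lemma lifts_at_level_pi_antipodal:
  assumes lu: "is_lift u \<phi>" and lv: "is_lift v \<psi>"
    and d\<phi>: "DERIV \<phi> x :> \<phi>'" and d\<psi>: "DERIV \<psi> y :> \<psi>'"
    and "\<bar>\<phi> x - \<psi> y\<bar> = pi" and "\<phi>' \<noteq> \<psi>'"
  shows "u x + v y = 0" "vderiv u x + vderiv v y \<noteq> 0"
proof -
  consider "\<phi> x = \<psi> y + pi" | "\<phi> x = \<psi> y - pi"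
    using \<open>\<bar>\<phi> x - \<psi> y\<bar> = pi\<close> by linarith
  then have "u x = - v y"
  proof cases
    case 1
    with lu lv show ?thesis by (simp add: is_lift_def minus_cis)
  next
    case 2
    with lu lv show ?thesis by (simp add: is_lift_def minus_cis')
  qed
  then show "u x + v y = 0"
    by simp
  have "vderiv u x = \<i> * of_real \<phi>' * u x" "vderiv v y = \<i> * of_real \<psi>' * v y"
    unfolding vderiv_def
    by (intro vector_derivative_at has_vector_derivative_lift[OF lu d\<phi>]
        has_vector_derivative_lift[OF lv d\<psi>])+
  with \<open>u x = - v y\<close> have "vderiv u x + vderiv v y = \<i> * of_real (\<phi>' - \<psi>') * u x"
    by (simp add: algebra_simps)
  moreover have "u x \<noteq> 0"
    using lu by (simp add: is_lift_def)
  ultimately show "vderiv u x + vderiv v y \<noteq> 0"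
    using \<open>\<phi>' \<noteq> \<psi>'\<close> by simp
qed

lemma exists_transversal_antipodal_pair:
  fixes u v :: "real \<Rightarrow> complex"
  assumes "L > 0" "periodic L u" "periodic L v"
    and du: "\<And>t. u differentiable (at t)" and dv: "\<And>t. v differentiable (at t)"
    and "\<And>t. norm (u t) = 1" "\<And>t. norm (v t) = 1" "\<And>t. u t + v t \<noteq> 0"
    and int: "((\<lambda>t. u t + v t) has_integral 0) {0..L}"
    and deg: "circle_degree L (\<lambda>t. sgn (u t + v t)) = 0"
  obtains x y where "y < x" "u x + v y = 0" "vderiv u x + vderiv v y \<noteq> 0"
proof -
  have "continuous_on UNIV u" "continuous_on UNIV v"
    using du dv by (auto intro!: continuous_at_imp_continuous_on differentiable_imp_continuous_within)
  then obtain \<phi> \<psi> where lu: "is_lift u \<phi>" and lv: "is_lift v \<psi>"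
    and close: "\<And>t. \<bar>\<phi> t - \<psi> t\<bar> < pi" and p\<phi>: "periodic L \<phi>" and p\<psi>: "periodic L \<psi>"
    using exists_close_periodic_lifts[OF assms(2,3) _ _ assms(6-8) deg] by blast
  have c\<phi>: "continuous_on UNIV \<phi>" and c\<psi>: "continuous_on UNIV \<psi>"
    using lu lv by (simp_all add: is_lift_def)
  have "((\<lambda>t. cis (\<phi> t) + cis (\<psi> t)) has_integral 0) {0..L}"
    using int lu lv by (simp add: is_lift_def)
  then obtain c x1 y1 x2 y2 where c: "\<bar>c\<bar> = pi"
    and below: "\<phi> x1 - \<psi> y1 < c" and above: "c < \<phi> x2 - \<psi> y2"
    using close_lifts_difference_crosses_pi[OF \<open>L > 0\<close> p\<phi> p\<psi> c\<phi> c\<psi> close] by blast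
  have no_diagonal: "\<phi> t - \<psi> t \<noteq> c" for t
    using close[of t] c by auto
  obtain p1 p2 where "\<phi> p1 \<noteq> \<phi> p2"
    using difference_crossing_imp_nonconstant[OF c\<psi> below above no_diagonal] by blast
  have "continuous_on UNIV (\<lambda>t. - \<phi> t)" "- \<psi> y1 - - \<phi> x1 < c" "c < - \<psi> y2 - - \<phi> x2"
    "\<And>t. - \<psi> t - - \<phi> t \<noteq> c"
    using c\<phi> below above no_diagonal by (auto intro: continuous_intros)
  then obtain q1 q2 where "- \<psi> q1 \<noteq> - \<psi> q2"
    using difference_crossing_imp_nonconstant[where \<phi>="\<lambda>t. - \<psi> t" and \<psi>="\<lambda>t. - \<phi> t"]
    by blast
  then have "\<psi> q1 \<noteq> \<psi> q2" by simp
  have d\<phi>: "DERIV \<phi> t :> deriv \<phi> t" and d\<psi>: "DERIV \<psi> t :> deriv \<psi> t" for t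
    using lift_differentiable[OF lu du] lift_differentiable[OF lv dv]
    by (simp_all add: DERIV_deriv_iff_real_differentiable)
  obtain x y where "y < x" "\<phi> x - \<psi> y = c" "deriv \<phi> x \<noteq> deriv \<psi> y"
    using periodic_level_transversal[OF d\<phi> d\<psi> p\<phi> p\<psi> \<open>L > 0\<close> below above] \<open>\<phi> p1 \<noteq> \<phi> p2\<close>
      \<open>\<psi> q1 \<noteq> \<psi> q2\<close> by blast
  with lifts_at_level_pi_antipodal[OF lu lv d\<phi> d\<psi>] c that show ?thesis
    by metis
qed

section \<open>The tangent of the solution\<close>

lemma difference_quotient_tendsto:
  fixes G :: "real \<Rightarrow> 'a::real_normed_vector"
  assumes "(G has_vector_derivative w) (at s0)"
  shows "((\<lambda>y. (G y - G s0) /\<^sub>R (y - s0)) \<longlongrightarrow> w) (at s0)"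
proof -
  have "((\<lambda>y. norm (G y - G s0 - (y - s0) *\<^sub>R w) / norm (y - s0)) \<longlongrightarrow> 0) (at s0)"
    using assms unfolding has_vector_derivative_def has_derivative_iff_norm by blast
  moreover have "eventually (\<lambda>y. norm (G y - G s0 - (y - s0) *\<^sub>R w) / norm (y - s0)
      = norm ((G y - G s0) /\<^sub>R (y - s0) - w)) (at s0)"
  proof -
    have "eventually (\<lambda>y. y \<noteq> s0) (at s0)"
      by (simp add: eventually_at_filter)
    then show ?thesis
    proof eventually_elim
      case (elim y)
      then have "(G y - G s0) /\<^sub>R (y - s0) - w = (G y - G s0 - (y - s0) *\<^sub>R w) /\<^sub>R (y - s0)"
        by (simp add: scaleR_diff_right)
      then show ?case by (simp add: divide_inverse mult.commute)
    qed
  qed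
  ultimately have "((\<lambda>y. norm ((G y - G s0) /\<^sub>R (y - s0) - w)) \<longlongrightarrow> 0) (at s0)"
    by (rule Lim_transform_eventually)
  then show ?thesis
    by (simp add: tendsto_norm_zero_iff LIM_zero_iff)
qed

lemma tendsto_sgn_at_simple_zero:
  fixes G :: "real \<Rightarrow> 'a::real_normed_vector"
  assumes "(G has_vector_derivative w) (at s0)" "G s0 = 0" "w \<noteq> 0"
  shows "((\<lambda>y. sgn (G y)) \<longlongrightarrow> sgn w) (at_right s0)"
    and "((\<lambda>y. sgn (G y)) \<longlongrightarrow> - sgn w) (at_left s0)"
proof -
  define Q where "Q y = G y /\<^sub>R (y - s0)" for y
  have "(Q \<longlongrightarrow> w) (at s0)"
    using difference_quotient_tendsto[OF assms(1)] \<open>G s0 = 0\<close> unfolding Q_def by simp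
  then have "((\<lambda>y. sgn (Q y)) \<longlongrightarrow> sgn w) (at s0)"
    using \<open>w \<noteq> 0\<close> by (rule tendsto_sgn)
  then have Q_left: "((\<lambda>y. sgn (Q y)) \<longlongrightarrow> sgn w) (at_left s0)"
    and Q_right: "((\<lambda>y. sgn (Q y)) \<longlongrightarrow> sgn w) (at_right s0)"
    by (simp_all add: filterlim_at_split)
  have sgn_G: "sgn (G y) = sgn (y - s0) *\<^sub>R sgn (Q y)" if "y \<noteq> s0" for y
  proof -
    have "G y = (y - s0) *\<^sub>R Q y"
      using that by (simp add: Q_def)
    then show ?thesis
      by (simp add: sgn_scaleR)
  qed
  have "eventually (\<lambda>y. sgn (Q y) = sgn (G y)) (at_right s0)"
    using eventually_at_right_less[of s0] by eventually_elim (simp add: sgn_G)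
  with Q_right show "((\<lambda>y. sgn (G y)) \<longlongrightarrow> sgn w) (at_right s0)"
    by (rule Lim_transform_eventually)
  have "eventually (\<lambda>y. y < s0) (at_left s0)"
    by (simp add: eventually_at_filter)
  then have "eventually (\<lambda>y. - sgn (Q y) = sgn (G y)) (at_left s0)"
    by eventually_elim (simp add: sgn_G)
  with tendsto_minus[OF Q_left] show "((\<lambda>y. sgn (G y)) \<longlongrightarrow> - sgn w) (at_left s0)"
    by (rule Lim_transform_eventually)
qed

lemma sgn_discontinuous_at_simple_zero:
  fixes G V :: "real \<Rightarrow> 'a::real_normed_vector"
  assumes "(G has_vector_derivative w) (at s0)" "G s0 = 0" "w \<noteq> 0"
    and V: "\<And>s. G s \<noteq> 0 \<Longrightarrow> V s = sgn (G s)"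
  shows "\<not> isCont V s0"
proof
  assume "isCont V s0"
  then have V_left: "(V \<longlongrightarrow> V s0) (at_left s0)" and V_right: "(V \<longlongrightarrow> V s0) (at_right s0)"
    by (simp_all add: isCont_def filterlim_at_split)
  note G_right = tendsto_sgn_at_simple_zero(1)[OF assms(1-3)]
  note G_left = tendsto_sgn_at_simple_zero(2)[OF assms(1-3)]
  have "sgn w \<noteq> 0" "- sgn w \<noteq> 0"
    using \<open>w \<noteq> 0\<close> by (simp_all add: sgn_zero_iff)
  have "eventually (\<lambda>y. sgn (G y) = V y) (at_right s0)"
    using tendsto_imp_eventually_ne[OF G_right \<open>sgn w \<noteq> 0\<close>]
    by eventually_elim (simp add: V sgn_zero_iff)
  with G_right have "(V \<longlongrightarrow> sgn w) (at_right s0)"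
    by (rule Lim_transform_eventually)
  with V_right have "sgn w = V s0"
    by (rule tendsto_unique[OF trivial_limit_at_right_real, rotated])
  have "eventually (\<lambda>y. sgn (G y) = V y) (at_left s0)"
    using tendsto_imp_eventually_ne[OF G_left \<open>- sgn w \<noteq> 0\<close>]
    by eventually_elim (simp add: V sgn_zero_iff)
  with G_left have "(V \<longlongrightarrow> - sgn w) (at_left s0)"
    by (rule Lim_transform_eventually)
  with V_left have "- sgn w = V s0"
    by (rule tendsto_unique[OF trivial_limit_at_left_real, rotated])
  with \<open>sgn w = V s0\<close> have "2 *\<^sub>R sgn w = 0"
    by (metis scaleR_2 right_minus)
  with \<open>w \<noteq> 0\<close> show False
    by (simp add: sgn_zero_iff)
qed

lemma has_vector_derivative_integral_upper:
  fixes f :: "real \<Rightarrow> 'a::banach"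
  assumes "continuous_on UNIV f" "c < x"
  shows "((\<lambda>y. integral {c..y} f) has_vector_derivative f x) (at x)"
proof -
  have "((\<lambda>y. integral {c..y} f) has_vector_derivative f x) (at x within {c..x + 1})"
    using integral_has_vector_derivative[OF continuous_on_subset[OF assms(1)], of c "x + 1" x] assms(2)
    by simp
  then have "((\<lambda>y. integral {c..y} f) has_vector_derivative f x) (at x within {c<..<x + 1})"
    by (rule has_vector_derivative_within_subset) auto
  then show ?thesis
    using has_vector_derivative_within_open[of x "{c<..<x + 1}"] assms(2) by auto
qed

lemma gamma_sol_has_vector_derivative:
  fixes \<alpha> \<beta> a :: "real \<Rightarrow> complex"
  assumes d\<alpha>: "\<And>t. (\<alpha> has_vector_derivative a t) (at t)" and c\<beta>: "continuous_on UNIV \<beta>"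
    and "T \<ge> 0"
  shows "(gamma_sol \<alpha> \<beta> T has_vector_derivative
           (a (s + T) + a (s - T)) / 2 + (\<beta> (s + T) - \<beta> (s - T)) / 2) (at s)"
proof -
  define c where "c = s - T - 1"
  define F where "F y = integral {c..y} \<beta>" for y
  define H where "H y = (\<alpha> (y + T) + \<alpha> (y + - T)) / 2 + (F (y + T) - F (y + - T)) / 2" for y
  have "(F has_vector_derivative \<beta> (s + T)) (at (s + T))"
    "(F has_vector_derivative \<beta> (s + - T)) (at (s + - T))"
    unfolding F_def using has_vector_derivative_integral_upper[OF c\<beta>] \<open>T \<ge> 0\<close>
    by (simp_all add: c_def)
  then have "(H has_vector_derivative
      (a (s + T) + a (s + - T)) / 2 + (\<beta> (s + T) - \<beta> (s + - T)) / 2) (at s)"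
    unfolding H_def by (intro derivative_intros has_vector_derivative_at_shift d\<alpha>)
  moreover have "H y = gamma_sol \<alpha> \<beta> T y" if "y \<in> ball s 1" for y
  proof -
    have y: "c \<le> y - T" "y - T \<le> y + T"
      using that \<open>T \<ge> 0\<close> by (auto simp: c_def dist_real_def)
    have "\<beta> integrable_on {c..y + T}"
      using c\<beta> continuous_on_subset integrable_continuous_real by blast
    then have "integral {c..y - T} \<beta> + integral {y - T..y + T} \<beta> = integral {c..y + T} \<beta>"
      by (rule Henstock_Kurzweil_Integration.integral_combine[OF y])
    then have "integral {y - T..y + T} \<beta> = F (y + T) - F (y - T)"
      by (simp add: F_def eq_diff_eq add.commute)
    then show ?thesis
      by (simp add: H_def gamma_sol_def)
  qed
  ultimately show ?thesis
    using has_vector_derivative_transform_within_open[of H _ s "ball s 1"] by simp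
qed

lemma smooth_has_vector_derivative:
  assumes "smooth f"
  shows "(f has_vector_derivative vderiv f t) (at t)"
  using assms[unfolded smooth_def, rule_format, of 0 t]
  by (simp add: vderiv_def vector_derivative_works[symmetric])

lemma smooth_vderiv:
  assumes "smooth f"
  shows "smooth (vderiv f)"
  using assms unfolding smooth_def by (metis funpow_Suc_right o_apply)

lemma smooth_differentiable:
  assumes "smooth f"
  shows "f differentiable (at t)"
  using assms[unfolded smooth_def, rule_format, of 0 t] by simp

lemma norm_add_diff_eq_1_if_orthogonal:
  fixes a b :: "'a::real_inner"
  assumes "inner a b = 0" "(norm a)\<^sup>2 + (norm b)\<^sup>2 = 1"
  shows "norm (a + b) = 1" "norm (a - b) = 1"
proof -
  have "(norm (a + b))\<^sup>2 = 1" "(norm (a - b))\<^sup>2 = 1"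
    using assms by (simp_all add: power2_norm_eq_inner inner_add_left inner_add_right
        inner_diff_left inner_diff_right inner_commute)
  then show "norm (a + b) = 1" "norm (a - b) = 1"
    using norm_ge_zero[of "a + b"] norm_ge_zero[of "a - b"] by (auto simp: power2_eq_1_iff)
qed

lemma gamma_sol_unit_tangent_discontinuous:
  fixes \<alpha> \<beta> a u v V :: "real \<Rightarrow> complex"
  assumes d\<alpha>: "\<And>t. (\<alpha> has_vector_derivative a t) (at t)" and c\<beta>: "continuous_on UNIV \<beta>"
    and u_def: "u = (\<lambda>t. a t + \<beta> t)" and v_def: "v = (\<lambda>t. a t - \<beta> t)"
    and "u differentiable (at x)" "v differentiable (at y)"
    and "y < x" "u x + v y = 0" "vderiv u x + vderiv v y \<noteq> 0"
    and V: "\<And>s. vderiv (gamma_sol \<alpha> \<beta> ((x - y) / 2)) s \<noteq> 0 \<Longrightarrow>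
              V s = sgn (vderiv (gamma_sol \<alpha> \<beta> ((x - y) / 2)) s)"
  shows "\<not> isCont V ((x + y) / 2)"
proof -
  define T where "T = (x - y) / 2"
  define G where "G s = (u (s + T) + v (s - T)) / 2" for s
  have x: "(x + y) / 2 + T = x" and y: "(x + y) / 2 + - T = y"
    by (simp_all add: T_def field_simps)
  have "vderiv (gamma_sol \<alpha> \<beta> T) s = G s" for s
  proof -
    have "vderiv (gamma_sol \<alpha> \<beta> T) s = (a (s + T) + a (s - T)) / 2 + (\<beta> (s + T) - \<beta> (s - T)) / 2"
      unfolding vderiv_def using gamma_sol_has_vector_derivative[OF d\<alpha> c\<beta>] \<open>y < x\<close>
      by (intro vector_derivative_at) (simp add: T_def)
    then show ?thesis
      by (simp add: G_def u_def v_def add_divide_distrib diff_divide_distrib algebra_simps)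
  qed
  moreover have "(G has_vector_derivative (vderiv u x + vderiv v y) / 2) (at ((x + y) / 2))"
  proof -
    have "(u has_vector_derivative vderiv u x) (at ((x + y) / 2 + T))"
      "(v has_vector_derivative vderiv v y) (at ((x + y) / 2 + - T))"
      using assms(5,6) x y by (simp_all add: vderiv_def vector_derivative_works)
    then show ?thesis
      unfolding G_def diff_conv_add_uminus by (intro derivative_intros has_vector_derivative_at_shift)
  qed
  moreover have "G ((x + y) / 2) = 0"
    using x y \<open>u x + v y = 0\<close> by (simp add: G_def)
  ultimately show ?thesis
    using sgn_discontinuous_at_simple_zero[of G] V \<open>vderiv u x + vderiv v y \<noteq> 0\<close>
    by (simp add: T_def)
qed

lemma initial_data_transversal_antipodal_pair:
  fixes \<alpha> \<beta> u v :: "real \<Rightarrow> complex"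
  assumes "L > 0" "smooth \<alpha>" "smooth \<beta>" "periodic L \<alpha>" "periodic L \<beta>"
    and "\<forall>s. vderiv \<alpha> s \<noteq> 0" "\<forall>s. inner (\<beta> s) (vderiv \<alpha> s) = 0"
    and "\<forall>s. (norm (vderiv \<alpha> s))\<^sup>2 + (norm (\<beta> s))\<^sup>2 = 1" "rotation_index L \<alpha> = 0"
    and u_def: "u = (\<lambda>t. vderiv \<alpha> t + \<beta> t)" and v_def: "v = (\<lambda>t. vderiv \<alpha> t - \<beta> t)"
  obtains x y where "y < x" "u x + v y = 0" "vderiv u x + vderiv v y \<noteq> 0"
proof -
  have d\<alpha>: "(\<alpha> has_vector_derivative vderiv \<alpha> t) (at t)" for t
    using smooth_has_vector_derivative[OF assms(2)] .
  have "periodic L (vderiv \<alpha>)"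
    using periodic_vector_derivative[OF assms(4) d\<alpha>] .
  then have "periodic L u" "periodic L v"
    using assms(5) by (simp_all add: u_def v_def periodic_def)
  moreover have "u differentiable (at t)" "v differentiable (at t)" for t
    unfolding u_def v_def
    by (intro differentiable_add differentiable_diff smooth_differentiable smooth_vderiv assms(2,3))+
  moreover have "norm (u t) = 1" "norm (v t) = 1" for t
    using norm_add_diff_eq_1_if_orthogonal[of "vderiv \<alpha> t" "\<beta> t"] assms(7,8)
    by (simp_all add: u_def v_def inner_commute)
  moreover have "u t + v t \<noteq> 0" for t
    using assms(6) by (simp add: u_def v_def)
  moreover have "((\<lambda>t. u t + v t) has_integral 0) {0..L}"
  proof -
    have "(vderiv \<alpha> has_integral \<alpha> L - \<alpha> 0) {0..L}"
      using \<open>L > 0\<close> d\<alpha> by (intro fundamental_theorem_of_calculus) (auto intro: has_vector_derivative_at_within)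
    moreover have "\<alpha> L = \<alpha> 0"
      using assms(4) by (metis add_0 periodic_def)
    ultimately have "(vderiv \<alpha> has_integral 0) {0..L}"
      by simp
    from has_integral_mult_right[OF this, of 2] show ?thesis
      by (simp add: u_def v_def)
  qed
  moreover have "circle_degree L (\<lambda>t. sgn (u t + v t)) = 0"
  proof -
    have "sgn (u t + v t) = vderiv \<alpha> t / of_real (norm (vderiv \<alpha> t))" for t
      by (simp add: u_def v_def Real_Vector_Spaces.sgn_mult sgn_eq)
    with assms(9) show ?thesis
      by (simp add: rotation_index_def)
  qed
  ultimately show ?thesis
    using that by (rule exists_transversal_antipodal_pair[OF \<open>L > 0\<close>])
qed

theorem proposition2p11:
  fixes L :: real and \<alpha> \<beta> :: "real \<Rightarrow> complex"
  assumes "L > 0"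
    and "smooth \<alpha>" and "smooth \<beta>"
    and "periodic L \<alpha>" and "periodic L \<beta>"
    and "\<forall>s. vderiv \<alpha> s \<noteq> 0"
    and "\<forall>s. inner (\<beta> s) (vderiv \<alpha> s) = 0"
    and "\<forall>s. (norm (vderiv \<alpha> s))\<^sup>2 + (norm (\<beta> s))\<^sup>2 = 1"
    and "rotation_index L \<alpha> = 0"
  shows "\<exists>T>0. \<not> (\<exists>V. continuous_on UNIV V \<and> (\<forall>s. norm (V s) = 1) \<and>
            (\<forall>s. vderiv (gamma_sol \<alpha> \<beta> T) s \<noteq> 0 \<longrightarrow>
                 V s = vderiv (gamma_sol \<alpha> \<beta> T) s / of_real (norm (vderiv (gamma_sol \<alpha> \<beta> T) s))))"
proof -
  define u where "u = (\<lambda>t. vderiv \<alpha> t + \<beta> t)"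
  define v where "v = (\<lambda>t. vderiv \<alpha> t - \<beta> t)"
  obtain x y where xy: "y < x" "u x + v y = 0" "vderiv u x + vderiv v y \<noteq> 0"
    using initial_data_transversal_antipodal_pair[OF assms u_def v_def] by blast
  have c\<beta>: "continuous_on UNIV \<beta>"
    using smooth_differentiable[OF assms(3)]
    by (auto intro!: continuous_at_imp_continuous_on differentiable_imp_continuous_within)
  have du: "u differentiable (at x)" and dv: "v differentiable (at y)"
    unfolding u_def v_def
    by (intro differentiable_add differentiable_diff smooth_differentiable smooth_vderiv assms(2,3))+
  note discontinuous = gamma_sol_unit_tangent_discontinuous[OF
      smooth_has_vector_derivative[OF assms(2)] c\<beta> u_def v_def du dv xy]
  show ?thesis
  proof (intro exI[of _ "(x - y) / 2"] conjI notI, use \<open>y < x\<close> in simp, elim exE conjE)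
    fix V :: "real \<Rightarrow> complex"
    assume "continuous_on UNIV V" and "\<forall>s. vderiv (gamma_sol \<alpha> \<beta> ((x - y) / 2)) s \<noteq> 0 \<longrightarrow>
      V s = vderiv (gamma_sol \<alpha> \<beta> ((x - y) / 2)) s
        / of_real (norm (vderiv (gamma_sol \<alpha> \<beta> ((x - y) / 2)) s))"
    with discontinuous[of V] show False
      by (simp add: sgn_eq continuous_on_eq_continuous_at)
  qed
qed

end
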